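(* Let $H=\{\lambda\in B_{1/\sqrt2}(0):\ \mathrm{Re}(\lambda)>0,\ \mathrm{Im}(\lambda)>0\}\setminus B_{2/3}(1/3)$. Every $\lambda_0\in\mathcal M_0\cap\mathrm{int}(H)$ is an interior point of $\mathcal M$.
   Context: $\mathbb D=\{z\in\mathbb C:|z|<1\}$; $B_r(z_0)$ is the open disc of radius $r$ centered at $z_0$. $\mathcal M=\{\lambda\in\mathbb D:\ \exists (a_k)_{k\ge1},\ a_k\in\{-1,0,1\},\ 1+\sum_{k\ge1}a_k\lambda^k=0\}$ (the set of $\lambda$ for which the attractor of $\{\lambda z-1,\lambda z+1\}$ is connected). $\mathcal M_0=\{\lambda\in\mathbb D:\ \exists n\ge1,\ a_1,\dots,a_n\in\{-1,0,1\},\ 1+\sum_{k=1}^n a_k\lambda^k=0\}$ is the set of zeros in $\mathbb D$ of polynomials of this form. *)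

theory Defs
  imports "HOL-Analysis.Analysis"
begin

definition M_set :: "complex set" where
  "M_set = {z. cmod z < 1 \<and>
     (\<exists>a :: nat \<Rightarrow> int. (\<forall>k\<ge>1. a k \<in> {-1, 0, 1}) \<and>
        1 + (\<Sum>k. of_int (a (Suc k)) * z ^ Suc k) = 0)}"

definition M0_set :: "complex set" where
  "M0_set = {z. cmod z < 1 \<and>
     (\<exists>n\<ge>1. \<exists>a :: nat \<Rightarrow> int. (\<forall>k\<in>{1..n}. a k \<in> {-1, 0, 1}) \<and>
        1 + (\<Sum>k=1..n. of_int (a k) * z ^ k) = 0)}"

definition H_set :: "complex set" where
  "H_set = {z. z \<in> ball 0 (1 / sqrt 2) \<and> Re z > 0 \<and> Im z > 0}
            - ball (1/3) (2/3)"

end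

theory Submission
  imports Defs
begin

(* For |lambda| < 1 outside the disc B_{2/3}(1/3), the parallelogram
   P = {x + y lambda : |x| <= (1 + 2|Re lambda|)/(2|lambda|^2), |y| <= 1/(2|lambda|^2)}
   is covered by the three copies d + lambda P, d in {-1,0,1}, so every point of P is a sum
   of a power series in lambda with digits in {-1,0,1}.  If p is a {-1,0,1}-polynomial of
   degree n with p(lambda0) = 0, then for lambda near lambda0 the point -p(lambda)/lambda^(n+1)
   is small, hence lies in P (in H, |lambda|^2 < 1/2 makes P contain the unit square in the
   coordinates (1, lambda)); appending its digits to the coefficients of p yields a power series
   vanishing at lambda. *)

definition has_expansion :: "int set \<Rightarrow> complex \<Rightarrow> complex \<Rightarrow> bool" where
  "has_expansion D l w \<longleftrightarrow>
     (\<exists>c :: nat \<Rightarrow> int. (\<forall>k. c k \<in> D) \<and> (\<lambda>k. of_int (c k) * l ^ k) sums w)"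

lemma has_expansion_if_self_similar:
  fixes l :: complex
  assumes l: "cmod l < 1" and "bounded P"
    and step: "\<And>w. w \<in> P \<Longrightarrow> \<exists>d\<in>D. \<exists>w'\<in>P. w = of_int d + l * w'"
    and "w \<in> P"
  shows "has_expansion D l w"
proof -
  obtain dig nxt where dig_in: "\<And>w. w \<in> P \<Longrightarrow> dig w \<in> D"
    and nxt_in: "\<And>w. w \<in> P \<Longrightarrow> nxt w \<in> P"
    and dig_nxt: "\<And>w. w \<in> P \<Longrightarrow> w = of_int (dig w) + l * nxt w"
    using step by metis
  define W where "W k = (nxt ^^ k) w" for k
  have W_Suc: "W (Suc k) = nxt (W k)" for k
    by (simp add: W_def)
  have W_in: "W k \<in> P" for k
    by (induction k) (simp_all add: W_Suc W_def \<open>w \<in> P\<close> nxt_in)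
  have W_step: "W k = of_int (dig (W k)) + l * W (Suc k)" for k
    unfolding W_Suc using dig_nxt[OF W_in] .
  have partial: "(\<Sum>i<N. of_int (dig (W i)) * l ^ i) = w - l ^ N * W N" for N
  proof (induction N)
    case (Suc N)
    have "(\<Sum>i<Suc N. of_int (dig (W i)) * l ^ i) = w - l ^ N * W N + of_int (dig (W N)) * l ^ N"
      by (simp add: Suc.IH)
    also have "\<dots> = w - l ^ N * (of_int (dig (W N)) + l * W (Suc N)) + of_int (dig (W N)) * l ^ N"
      using W_step[of N] by (rule arg_cong)
    also have "\<dots> = w - l ^ Suc N * W (Suc N)"
      by (simp add: algebra_simps)
    finally show ?case .
  qed (simp add: W_def)
  obtain K where K: "\<And>z. z \<in> P \<Longrightarrow> cmod z \<le> K"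
    using \<open>bounded P\<close> by (auto simp: bounded_iff)
  have tail_null: "(\<lambda>N. l ^ N * W N) \<longlonglongrightarrow> 0"
  proof (rule Lim_null_comparison)
    show "\<forall>\<^sub>F N in sequentially. cmod (l ^ N * W N) \<le> cmod l ^ N * K"
      using K[OF W_in] by (simp add: norm_mult norm_power mult_left_mono)
    show "(\<lambda>N. cmod l ^ N * K) \<longlonglongrightarrow> 0"
      using l by (intro tendsto_mult_left_zero LIMSEQ_power_zero) simp
  qed
  have "(\<lambda>N. w - l ^ N * W N) \<longlonglongrightarrow> w - 0"
    by (intro tendsto_diff tendsto_const tail_null)
  then have "(\<lambda>k. of_int (dig (W k)) * l ^ k) sums w"
    unfolding sums_def partial by simp
  moreover have "\<forall>k. dig (W k) \<in> D"
    using dig_in W_in by blast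
  ultimately show ?thesis
    unfolding has_expansion_def by (intro exI[of _ "\<lambda>k. dig (W k)"]) simp
qed

lemma exists_digit_near:
  fixes x :: real
  assumes "\<bar>x\<bar> \<le> 3/2"
  shows "\<exists>d\<in>{-1, 0, 1 :: int}. \<bar>x - of_int d\<bar> \<le> 1/2"
proof (cases "x > 1/2")
  case True
  with assms show ?thesis by (intro bexI[of _ 1]) (auto simp: abs_if)
next
  case False
  with assms show ?thesis
    by (cases "x < -1/2") (auto simp: abs_if intro: bexI[of _ "-1"] bexI[of _ 0])
qed

lemma has_expansion_parallelogram:
  fixes l :: complex and x y :: real
  assumes l: "cmod l < 1" and c: "1 + 2 * \<bar>Re l\<bar> \<le> 3 * cmod l ^ 2"
    and x: "\<bar>x\<bar> \<le> (1 + 2 * \<bar>Re l\<bar>) / (2 * cmod l ^ 2)"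
    and y: "\<bar>y\<bar> \<le> 1 / (2 * cmod l ^ 2)"
  shows "has_expansion {-1, 0, 1} l (of_real x + of_real y * l)"
proof -
  define r2 where "r2 = cmod l ^ 2"
  define A where "A = (1 + 2 * \<bar>Re l\<bar>) / (2 * r2)"
  define B where "B = 1 / (2 * r2)"
  define P where "P = {of_real x + of_real y * l | x y. \<bar>x\<bar> \<le> A \<and> \<bar>y\<bar> \<le> B}"
  have P_mem: "of_real x + of_real y * l \<in> P" if "\<bar>x\<bar> \<le> A" "\<bar>y\<bar> \<le> B" for x y
    unfolding P_def using that by blast
  have r2: "r2 > 0"
    using c abs_ge_zero[of "Re l"] unfolding r2_def by linarith
  have "A \<le> 3 / 2"
    using c r2 by (simp add: A_def r2_def divide_simps)
  have "2 * of_real (Re l) - l = cnj l"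
    by (simp add: complex_eq_iff)
  then have conj_l: "l * (2 * of_real (Re l) - l) = of_real r2"
    by (simp add: r2_def complex_norm_square[symmetric])
  have "bounded P"
  proof -
    have "cmod w \<le> A + B" if "w \<in> P" for w
    proof -
      obtain x y where w: "w = of_real x + of_real y * l" and "\<bar>x\<bar> \<le> A" "\<bar>y\<bar> \<le> B"
        using \<open>w \<in> P\<close> by (auto simp: P_def)
      have "cmod w \<le> \<bar>x\<bar> + \<bar>y\<bar> * cmod l"
        unfolding w by (metis norm_mult norm_of_real norm_triangle_le order_refl)
      also have "\<dots> \<le> A + B * 1"
        using \<open>\<bar>x\<bar> \<le> A\<close> \<open>\<bar>y\<bar> \<le> B\<close> l by (intro add_mono mult_mono) auto
      finally show ?thesis by simp
    qed
    then show ?thesis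
      unfolding bounded_iff by blast
  qed
  moreover have "\<exists>d\<in>{-1, 0, 1}. \<exists>w'\<in>P. w = of_int d + l * w'" if "w \<in> P" for w
  proof -
    obtain x y where w: "w = of_real x + of_real y * l" and "\<bar>x\<bar> \<le> A" "\<bar>y\<bar> \<le> B"
      using \<open>w \<in> P\<close> by (auto simp: P_def)
    have "\<bar>x\<bar> \<le> 3/2"
      using \<open>\<bar>x\<bar> \<le> A\<close> \<open>A \<le> 3/2\<close> by linarith
    then obtain d where d: "d \<in> {-1, 0, 1}" and d_near: "\<bar>x - of_int d\<bar> \<le> 1/2"
      using exists_digit_near by blast
    define e where "e = x - of_int d"
    \<comment> \<open>\<open>(w - d) / l = y + e / l\<close>, and \<open>1 / l = (2 Re l - l) / r2\<close>\<close>
    define w' where "w' = of_real (y + 2 * Re l * e / r2) + of_real (- e / r2) * l"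
    have "l * w' = of_real y * l + of_real e * (l * (2 * of_real (Re l) - l)) / of_real r2"
      using r2 by (simp add: w'_def field_simps)
    also have "\<dots> = of_real y * l + of_real e"
      using r2 by (simp only: conj_l) simp
    finally have "w = of_int d + l * w'"
      by (simp add: w e_def)
    moreover have "w' \<in> P"
    proof -
      have "\<bar>2 * Re l * e / r2\<bar> = (2 * \<bar>e\<bar>) * \<bar>Re l\<bar> / r2"
        using r2 by (simp add: abs_mult)
      also have "\<dots> \<le> 1 * \<bar>Re l\<bar> / r2"
        using d_near r2 by (intro divide_right_mono mult_right_mono) (auto simp: e_def)
      finally have "\<bar>2 * Re l * e / r2\<bar> \<le> \<bar>Re l\<bar> / r2"
        by simp
      then have "\<bar>y + 2 * Re l * e / r2\<bar> \<le> B + \<bar>Re l\<bar> / r2"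
        using \<open>\<bar>y\<bar> \<le> B\<close> abs_triangle_ineq[of y "2 * Re l * e / r2"] by linarith
      also have "B + \<bar>Re l\<bar> / r2 = A"
        using r2 by (simp add: A_def B_def field_simps)
      finally have "\<bar>y + 2 * Re l * e / r2\<bar> \<le> A" .
      moreover have "\<bar>- e / r2\<bar> \<le> B"
        using d_near r2 by (simp add: e_def B_def divide_simps abs_minus_commute)
      ultimately show ?thesis
        unfolding w'_def by (rule P_mem)
    qed
    ultimately show ?thesis using d by blast
  qed
  moreover have "of_real x + of_real y * l \<in> P"
    using x y by (intro P_mem) (simp_all add: A_def B_def r2_def)
  ultimately show ?thesis
    by (rule has_expansion_if_self_similar[OF l])
qed

lemma has_expansion_if_small:
  fixes l w :: complex
  assumes r: "cmod l ^ 2 \<le> 1/2" and c: "1 + 2 * \<bar>Re l\<bar> \<le> 3 * cmod l ^ 2"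
    and v: "Im l \<noteq> 0" and w: "cmod w * (1 + \<bar>Im l\<bar>) \<le> \<bar>Im l\<bar>"
  shows "has_expansion {-1, 0, 1} l w"
proof -
  define y where "y = Im w / Im l"
  define x where "x = Re w - y * Re l"
  have wxy: "w = of_real x + of_real y * l"
    using v by (intro complex_eqI) (simp_all add: x_def y_def)
  have "cmod l < 1"
    using r power_less1_D[of "cmod l" 2] by simp
  have small: "cmod w + cmod w / \<bar>Im l\<bar> \<le> 1"
    using w v by (simp add: field_simps)
  have y: "\<bar>y\<bar> \<le> cmod w / \<bar>Im l\<bar>"
    unfolding y_def abs_divide using v by (intro divide_right_mono abs_Im_le_cmod) simp
  have "\<bar>x\<bar> \<le> \<bar>Re w\<bar> + \<bar>y\<bar> * \<bar>Re l\<bar>"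
    unfolding x_def by (metis abs_mult abs_triangle_ineq4)
  also have "\<dots> \<le> cmod w + cmod w / \<bar>Im l\<bar> * 1"
    using abs_Re_le_cmod[of w] abs_Re_le_cmod[of l] \<open>cmod l < 1\<close> y
    by (intro add_mono mult_mono) auto
  finally have x1: "\<bar>x\<bar> \<le> 1"
    using small by linarith
  have y1: "\<bar>y\<bar> \<le> 1"
    using y small norm_ge_zero[of w] by linarith
  have "cmod l ^ 2 > 0"
    using c abs_ge_zero[of "Re l"] by linarith
  then have B1: "1 \<le> 1 / (2 * cmod l ^ 2)"
    using r by (simp add: field_simps)
  have BA: "1 / (2 * cmod l ^ 2) \<le> (1 + 2 * \<bar>Re l\<bar>) / (2 * cmod l ^ 2)"
    by (intro divide_right_mono) auto
  show ?thesis
    unfolding wxy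
    by (rule has_expansion_parallelogram[OF \<open>cmod l < 1\<close> c]) (use x1 y1 B1 BA in linarith)+
qed

lemma M_set_if_tail_expansion:
  fixes l :: complex and a :: "nat \<Rightarrow> int"
  assumes l: "cmod l < 1" "l \<noteq> 0" and a: "\<forall>k\<in>{1..n}. a k \<in> {-1, 0, 1}"
    and tail: "has_expansion {-1, 0, 1} l (- (1 + (\<Sum>k=1..n. of_int (a k) * l ^ k)) / l ^ (n + 1))"
  shows "l \<in> M_set"
proof -
  define p where "p = 1 + (\<Sum>k=1..n. of_int (a k) * l ^ k)"
  obtain c :: "nat \<Rightarrow> int" where c: "\<forall>k. c k \<in> {-1, 0, 1}"
    and c_sums: "(\<lambda>k. of_int (c k) * l ^ k) sums (- p / l ^ (n + 1))"
    using tail unfolding has_expansion_def p_def by blast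
  define a' where "a' k = (if k \<le> n then a k else c (k - n - 1))" for k
  define f where "f k = of_int (a' (Suc k)) * l ^ Suc k" for k
  have "(\<lambda>i. f (i + n)) = (\<lambda>i. of_int (c i) * l ^ i * l ^ (n + 1))"
    by (simp add: fun_eq_iff f_def a'_def power_add algebra_simps)
  then have "(\<lambda>i. f (i + n)) sums (- p)"
    using sums_mult2[OF c_sums, of "l ^ (n + 1)"] l by simp
  then have "f sums (- p + (\<Sum>i<n. f i))"
    by (simp add: sums_iff_shift)
  moreover have "(\<Sum>i<n. f i) = (\<Sum>k=1..n. of_int (a k) * l ^ k)"
  proof -
    have "(\<Sum>i<n. f i) = (\<Sum>i<n. of_int (a (Suc i)) * l ^ Suc i)"
      by (intro sum.cong) (auto simp: f_def a'_def)
    also have "\<dots> = (\<Sum>k=1..n. of_int (a k) * l ^ k)"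
      using sum.atLeast1_atMost_eq[of "\<lambda>k. of_int (a k) * l ^ k" n] by simp
    finally show ?thesis .
  qed
  ultimately have "f sums (-1)"
    by (simp add: p_def)
  then have "1 + (\<Sum>k. of_int (a' (Suc k)) * l ^ Suc k) = 0"
    unfolding f_def by (simp add: sums_iff)
  moreover have "\<forall>k\<ge>1. a' k \<in> {-1, 0, 1}"
    using a c by (auto simp: a'_def)
  ultimately show ?thesis
    unfolding M_set_def using l by blast
qed

lemma H_setD:
  assumes "z \<in> H_set"
  shows "Im z > 0" and "cmod z ^ 2 \<le> 1/2" and "1 + 2 * \<bar>Re z\<bar> \<le> 3 * cmod z ^ 2"
proof -
  have z: "cmod z < 1 / sqrt 2" "Re z > 0" "Im z > 0" "2/3 \<le> cmod (1/3 - z)"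
    using assms by (auto simp: H_set_def dist_norm)
  show "Im z > 0"
    using z by simp
  have "cmod z ^ 2 \<le> (1 / sqrt 2) ^ 2"
    using z by (intro power_mono) auto
  then show "cmod z ^ 2 \<le> 1/2"
    by (simp add: power_divide)
  have "(2/3) ^ 2 \<le> cmod (1/3 - z) ^ 2"
    using z by (intro power_mono) auto
  also have "\<dots> = cmod z ^ 2 - 2/3 * Re z + 1/9"
    by (simp add: cmod_power2 power2_diff power_divide)
  finally show "1 + 2 * \<bar>Re z\<bar> \<le> 3 * cmod z ^ 2"
    using z by (simp add: power_divide)
qed

lemma M_set_if_near_root:
  fixes a :: "nat \<Rightarrow> int"
  assumes l: "l \<in> H_set" and a: "\<forall>k\<in>{1..n}. a k \<in> {-1, 0, 1}"
    and near: "cmod (1 + (\<Sum>k=1..n. of_int (a k) * l ^ k)) * (1 + Im l) \<le> cmod l ^ (n + 1) * Im l"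
  shows "l \<in> M_set"
proof -
  note H = H_setD[OF l]
  have "l \<noteq> 0"
    using H(1) by auto
  have "cmod l < 1"
    using H(2) power_less1_D[of "cmod l" 2] by simp
  define w where "w = - (1 + (\<Sum>k=1..n. of_int (a k) * l ^ k)) / l ^ (n + 1)"
  have "cmod w * (1 + Im l) = cmod (1 + (\<Sum>k=1..n. of_int (a k) * l ^ k)) * (1 + Im l) / cmod l ^ (n + 1)"
    by (simp only: w_def norm_divide norm_minus_cancel norm_power times_divide_eq_left)
  also have "\<dots> \<le> cmod l ^ (n + 1) * Im l / cmod l ^ (n + 1)"
    using near by (intro divide_right_mono) auto
  also have "\<dots> = Im l"
    using \<open>l \<noteq> 0\<close> by simp
  finally have "cmod w * (1 + \<bar>Im l\<bar>) \<le> \<bar>Im l\<bar>"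
    using H(1) by simp
  then have "has_expansion {-1, 0, 1} l w"
    using H(1) by (intro has_expansion_if_small[OF H(2,3)]) auto
  then show ?thesis
    using M_set_if_tail_expansion[OF \<open>cmod l < 1\<close> \<open>l \<noteq> 0\<close> a] by (simp add: w_def)
qed

theorem mainTheorem2:
  assumes "z0 \<in> M0_set \<inter> interior H_set"
  shows "z0 \<in> interior M_set"
proof -
  obtain n and a :: "nat \<Rightarrow> int" where a: "\<forall>k\<in>{1..n}. a k \<in> {-1, 0, 1}"
    and root: "1 + (\<Sum>k=1..n. of_int (a k) * z0 ^ k) = 0"
    using assms unfolding M0_set_def by blast
  define p where "p z = 1 + (\<Sum>k=1..n. of_int (a k) * z ^ k)" for z :: complex
  define S where "S = interior H_set \<inter> {z. cmod (p z) * (1 + Im z) < cmod z ^ (n + 1) * Im z}"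
  have "open S"
    unfolding S_def p_def by (intro open_Int open_interior open_Collect_less continuous_intros)
  moreover have "z0 \<in> S"
  proof -
    have "z0 \<in> interior H_set"
      using assms by blast
    moreover from this have "Im z0 > 0"
      using H_setD(1) interior_subset by blast
    moreover from this have "z0 \<noteq> 0"
      by auto
    ultimately show ?thesis
      using root by (simp add: S_def p_def)
  qed
  moreover have "S \<subseteq> M_set"
  proof
    fix z assume "z \<in> S"
    then have "z \<in> H_set" and "cmod (p z) * (1 + Im z) \<le> cmod z ^ (n + 1) * Im z"
      using interior_subset by (auto simp: S_def)
    then show "z \<in> M_set"
      using M_set_if_near_root[OF _ a] by (simp add: p_def)
  qed
  ultimately show ?thesis
    by (rule interiorI)
qed

end
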